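(* Let $\{\Gamma_n\}_{n\ge0}$ be the Diamond Hierarchical Lattice and for each $n$ let $Z_n(q,y)=\sum_{A\subseteq E_n}q^{k(A)}(y-1)^{|A|}$ be the Potts partition function of $\Gamma_n=(V_n,E_n)$, and $\mathcal{S}_n:=(Z_n(q,y)=0)$ its zero divisor. Then for every $n\ge0$, $$\mathcal{S}_n=(R^n)^*(\mathcal{S}_0),$$ where $\mathcal{S}_0=(q(y+q-1)=0)$ and $R:\mathbb{C}\times\mathbb{P}^1\to\mathbb{C}\times\mathbb{P}^1$ is $$R(q,y)=(q,r_q(y)),\qquad r_q(y)=\left(\frac{y^2+q-1}{2y+q-2}\right)^2.$$
   Context: The Diamond Hierarchical Lattice: $\Gamma_0$ is a single edge with endpoints $a,b$; $\Gamma_1$ is the diamond (vertices $a,b,c,d$, edges $ac,cb,ad,db$); $\Gamma_{n+1}$ is obtained from the diamond by replacing each of its four edges with a copy of $\Gamma_n$, whose marked vertices $a,b$ serve as the endpoints of that edge. $k(A)$ is the number of connected components (including isolated vertices) of $(V_n,A)$; for integer $q\ge2$, $Z_n(q,y)=\sum_\sigma y^{\mathcal{E}(\sigma)}$, summing over maps $\sigma:V_n\to\{1,\dots,q\}$ with $\mathcal{E}(\sigma)$ the number of edges whose endpoints get equal values. The zero divisor of a polynomial counts each irreducible component with its order of vanishing; points $y\in\mathbb{P}^1$ are written in the standard chart $\mathbb{C}\subset\mathbb{P}^1$, and $R^*$ denotes pullback of divisors. *)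

theory Defs
  imports Complex_Main "HOL-Computational_Algebra.Computational_Algebra" "HOL-Computational_Algebra.Field_as_Ring"
begin

text \<open>A graph is a pair (N, es): vertex set {0..<N}, edges given as a list of
  endpoint pairs (edge i is es ! i).  The marked vertices are a = 0 and b = 1.\<close>

definition diamond_src :: "nat \<Rightarrow> nat" where
  "diamond_src i = [0, 2, 0, 3] ! i"
definition diamond_tgt :: "nat \<Rightarrow> nat" where
  "diamond_tgt i = [2, 1, 3, 1] ! i"

text \<open>Embedding of vertex v of the i-th copy of a graph with N vertices into the
  next generation (diamond vertices a=0, b=1, c=2, d=3; copies on edges ac, cb, ad, db).\<close>
definition dhl_emb :: "nat \<Rightarrow> nat \<Rightarrow> nat \<Rightarrow> nat" where
  "dhl_emb N i v = (if v = 0 then diamond_src i else if v = 1 then diamond_tgt i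
                    else 4 + i * (N - 2) + (v - 2))"

fun DHL :: "nat \<Rightarrow> nat \<times> (nat \<times> nat) list" where
  "DHL 0 = (2, [(0, 1)])"
| "DHL (Suc n) = (let (N, es) = DHL n in
     (4 + 4 * (N - 2),
      concat (map (\<lambda>i. map (\<lambda>(u, v). (dhl_emb N i u, dhl_emb N i v)) es) [0..<4])))"

definition nverts :: "nat \<Rightarrow> nat" where "nverts n = fst (DHL n)"
definition edges :: "nat \<Rightarrow> (nat \<times> nat) list" where "edges n = snd (DHL n)"

definition adj :: "(nat \<times> nat) list \<Rightarrow> nat set \<Rightarrow> (nat \<times> nat) set" where
  "adj es A = {(u, v). \<exists>i\<in>A. i < length es \<and> (es ! i = (u, v) \<or> es ! i = (v, u))}"

definition ncomp :: "nat \<Rightarrow> (nat \<times> nat) list \<Rightarrow> nat set \<Rightarrow> nat" where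
  "ncomp N es A = card ({0..<N} // ((adj es A)\<^sup>* \<inter> ({0..<N} \<times> {0..<N})))"

section \<open>Bivariate polynomials: outer variable y, coefficients in C[q]\<close>

definition qv :: "complex poly poly" where "qv = [:[:0, 1:]:]"
definition yv :: "complex poly poly" where "yv = [:0, 1:]"

definition Zpoly :: "nat \<Rightarrow> complex poly poly" where
  "Zpoly n = (\<Sum>A\<in>Pow {0..<length (edges n)}.
      qv ^ ncomp (nverts n) (edges n) A * (yv - 1) ^ card A)"

text \<open>Zero divisor of a nonzero polynomial in C[q,y]: the multiset of its irreducible
  components (normalized prime factors) counted with order of vanishing.
  (A polynomial has no zero components on the line y = \<infinity> of C \<times> P^1.)\<close>
definition zero_divisor :: "complex poly poly \<Rightarrow> complex poly poly multiset" where
  "zero_divisor f = prime_factorization f"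

text \<open>Homogeneous lift of r_q: [Y:W] \<mapsto> [(Y^2+(q-1)W^2)^2 : W^2 (2Y+(q-2)W)^2].\<close>
definition Rlift :: "complex poly poly \<times> complex poly poly \<Rightarrow> complex poly poly \<times> complex poly poly" where
  "Rlift PQ = (let (P, Q) = PQ in
     ((P^2 + (qv - 1) * Q^2)^2, Q^2 * (2 * P + (qv - 2) * Q)^2))"

text \<open>Substitution of a homogeneous pair into the homogenization (in y) of f.\<close>
definition hom_subst :: "complex poly poly \<Rightarrow> complex poly poly \<Rightarrow> complex poly poly \<Rightarrow> complex poly poly" where
  "hom_subst f P Q = (\<Sum>k\<le>degree f. [:coeff f k:] * P ^ k * Q ^ (degree f - k))"

text \<open>Pullback (R^n)^* of the zero divisor of f on C \<times> P^1, computed via the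
  homogeneous lift of R^n: the divisor of F(q, P_n, Q_n).\<close>
definition pullback_div :: "nat \<Rightarrow> complex poly poly \<Rightarrow> complex poly poly multiset" where
  "pullback_div n f = (let (P, Q) = (Rlift ^^ n) (yv, 1) in zero_divisor (hom_subst f P Q))"

definition S0poly :: "complex poly poly" where
  "S0poly = qv * (yv + qv - 1)"

end

theory Submission
  imports Defs
begin

text \<open>For an integer \<open>q = m\<close> the Fortuin-Kasteleyn identity turns \<open>Z\<^sub>n(m, y)\<close> into the sum, over
  all \<open>m\<close>-colourings of \<open>\<Gamma>\<^sub>n\<close>, of \<open>y\<close> raised to the number of monochromatic edges. Pinning the
  colours \<open>s, t\<close> of the marked vertices gives a sum that only depends on whether \<open>s = t\<close>
  (value \<open>u\<^sub>n\<close>) or not (value \<open>v\<^sub>n\<close>). As \<open>\<Gamma>\<^sub>n\<^sub>+\<^sub>1\<close> is two series pairs of copies of \<open>\<Gamma>\<^sub>n\<close> put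
  in parallel, the pinned sums of \<open>\<Gamma>\<^sub>n\<^sub>+\<^sub>1\<close> are the entrywise squares of the matrix square of
  those of \<open>\<Gamma>\<^sub>n\<close>: \<open>(u, v) \<mapsto> ((u\<^sup>2 + (m - 1) v\<^sup>2)\<^sup>2, v\<^sup>2 (2u + (m - 2) v)\<^sup>2)\<close>, the homogeneous lift
  of \<open>r\<^sub>m\<close>, started at \<open>(y, 1)\<close>. Summing over \<open>s, t\<close> gives \<open>Z\<^sub>n = m (u\<^sub>n + (m - 1) v\<^sub>n)\<close>, the
  lift of \<open>S\<^sub>0\<close> pulled back by \<open>R\<^sup>n\<close>. Both sides are polynomials agreeing for infinitely many
  \<open>q\<close>, hence equal, and so are their divisors.\<close>

section \<open>Colourings and the Fortuin-Kasteleyn identity\<close>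

lemma bij_betw_class_constant_functions:
  assumes eqv: "equiv X R"
  shows "bij_betw (\<lambda>g. restrict (\<lambda>x. g (R `` {x})) X) (X // R \<rightarrow>\<^sub>E C)
    {f \<in> X \<rightarrow>\<^sub>E C. \<forall>(x, y)\<in>R. f x = f y}"
proof -
  define lift where "lift g = restrict (\<lambda>x. g (R `` {x})) X" for g :: "'a set \<Rightarrow> 'b"
  define descend where "descend f = restrict (\<lambda>c. f (SOME x. x \<in> c)) (X // R)" for f :: "'a \<Rightarrow> 'b"
  have some_in_class: "(SOME x. x \<in> c) \<in> c" "c \<subseteq> X" if "c \<in> X // R" for c
    using that in_quotient_imp_non_empty[OF eqv] in_quotient_imp_subset[OF eqv]
    by (auto simp: some_in_eq)
  have class_of_member: "R `` {x} = c" if "c \<in> X // R" "x \<in> c" for c x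
    using that eqv by (metis equiv_class_eq_iff quotientE Image_singleton_iff)
  have "bij_betw lift (X // R \<rightarrow>\<^sub>E C) {f \<in> X \<rightarrow>\<^sub>E C. \<forall>(x, y)\<in>R. f x = f y}"
  proof (rule bij_betw_byWitness[where f' = descend])
    show "\<forall>g\<in>X // R \<rightarrow>\<^sub>E C. descend (lift g) = g"
    proof
      fix g assume g: "g \<in> X // R \<rightarrow>\<^sub>E C"
      show "descend (lift g) = g"
      proof (rule extensionalityI[of _ "X // R"])
        fix c assume c: "c \<in> X // R"
        then have "R `` {SOME x. x \<in> c} = c"
          using some_in_class[OF c] by (intro class_of_member)
        then show "descend (lift g) c = g c"
          using some_in_class[OF c] c by (auto simp: descend_def lift_def)
      qed (use g in \<open>auto simp: descend_def PiE_def\<close>)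
    qed
    show "\<forall>f\<in>{f \<in> X \<rightarrow>\<^sub>E C. \<forall>(x, y)\<in>R. f x = f y}. lift (descend f) = f"
    proof
      fix f assume f: "f \<in> {f \<in> X \<rightarrow>\<^sub>E C. \<forall>(x, y)\<in>R. f x = f y}"
      show "lift (descend f) = f"
      proof (rule extensionalityI[of _ X])
        fix x assume x: "x \<in> X"
        then have "R `` {x} \<in> X // R" "(x, SOME x'. x' \<in> R `` {x}) \<in> R"
          using some_in_class[of "R `` {x}"] by (auto intro: quotientI)
        then show "lift (descend f) x = f x"
          using f x by (auto simp: lift_def descend_def)
      qed (use f in \<open>auto simp: lift_def PiE_def\<close>)
    qed
    show "lift ` (X // R \<rightarrow>\<^sub>E C) \<subseteq> {f \<in> X \<rightarrow>\<^sub>E C. \<forall>(x, y)\<in>R. f x = f y}"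
      using eqv equiv_type[OF eqv] by (fastforce simp: lift_def quotientI equiv_class_eq)
    show "descend ` {f \<in> X \<rightarrow>\<^sub>E C. \<forall>(x, y)\<in>R. f x = f y} \<subseteq> X // R \<rightarrow>\<^sub>E C"
      using some_in_class by (fastforce simp: descend_def)
  qed
  then show ?thesis
    unfolding lift_def[abs_def] .
qed

lemma card_class_constant_functions:
  assumes "equiv X R" "finite X"
  shows "card {f \<in> X \<rightarrow>\<^sub>E C. \<forall>(x, y)\<in>R. f x = f y} = card C ^ card (X // R)"
proof -
  have "finite (X // R)"
    using \<open>finite X\<close> by (simp add: quotient_def)
  then show ?thesis
    using bij_betw_same_card[OF bij_betw_class_constant_functions[OF \<open>equiv X R\<close>, of C]]
    by (simp add: card_PiE)
qed

type_synonym colouring = "nat \<Rightarrow> nat"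

definition colourings :: "nat \<Rightarrow> nat \<Rightarrow> colouring set" where
  "colourings N m = {0..<N} \<rightarrow>\<^sub>E {0..<m}"

lemma finite_colourings: "finite (colourings N m)"
  by (simp add: colourings_def finite_PiE)

lemma colourings_less: "\<sigma> \<in> colourings N m \<Longrightarrow> x < N \<Longrightarrow> \<sigma> x < m"
  by (auto simp: colourings_def)

lemma equiv_components: "equiv {0..<N} ((adj es A)\<^sup>* \<inter> {0..<N} \<times> {0..<N})"
proof -
  have "sym (adj es A)"
    by (auto simp: adj_def intro: symI)
  then have "sym ((adj es A)\<^sup>*)"
    by (rule sym_rtrancl)
  then show ?thesis
    by (auto simp: equiv_def intro!: refl_onI symI transI dest: symD)
qed

lemma constant_on_edges_iff_constant_on_components:
  assumes in_range: "\<forall>(u, v)\<in>set es. u < N \<and> v < N" and A: "A \<subseteq> {0..<length es}"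
  shows "(\<forall>i\<in>A. \<sigma> (fst (es ! i)) = \<sigma> (snd (es ! i))) \<longleftrightarrow>
    (\<forall>(x, y)\<in>(adj es A)\<^sup>* \<inter> {0..<N} \<times> {0..<N}. \<sigma> x = \<sigma> y)"
proof
  assume edges: "\<forall>i\<in>A. \<sigma> (fst (es ! i)) = \<sigma> (snd (es ! i))"
  have "\<sigma> x = \<sigma> y" if "(x, y) \<in> (adj es A)\<^sup>*" for x y
    using that by induction (use edges in \<open>auto simp: adj_def\<close>)
  then show "\<forall>(x, y)\<in>(adj es A)\<^sup>* \<inter> {0..<N} \<times> {0..<N}. \<sigma> x = \<sigma> y"
    by blast
next
  assume components: "\<forall>(x, y)\<in>(adj es A)\<^sup>* \<inter> {0..<N} \<times> {0..<N}. \<sigma> x = \<sigma> y"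
  show "\<forall>i\<in>A. \<sigma> (fst (es ! i)) = \<sigma> (snd (es ! i))"
  proof
    fix i assume i: "i \<in> A"
    then have "es ! i \<in> set es" "(fst (es ! i), snd (es ! i)) \<in> adj es A"
      using A unfolding adj_def by (auto intro!: bexI[of _ i])
    then show "\<sigma> (fst (es ! i)) = \<sigma> (snd (es ! i))"
      using components in_range by fastforce
  qed
qed

lemma card_colourings_constant_on_edges:
  assumes "\<forall>(u, v)\<in>set es. u < N \<and> v < N" and "A \<subseteq> {0..<length es}"
  shows "card {\<sigma> \<in> colourings N m. \<forall>i\<in>A. \<sigma> (fst (es ! i)) = \<sigma> (snd (es ! i))} = m ^ ncomp N es A"
  using card_class_constant_functions[OF equiv_components, of N "{0..<m}"]
  by (simp add: constant_on_edges_iff_constant_on_components[OF assms] colourings_def ncomp_def)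

lemma prod_of_bool:
  "finite A \<Longrightarrow> (\<Prod>x\<in>A. of_bool (P x) :: 'a :: comm_semiring_1) = of_bool (\<forall>x\<in>A. P x)"
  by (induction A rule: finite_induct) auto

definition potts_weight :: "complex \<Rightarrow> (nat \<times> nat) list \<Rightarrow> colouring \<Rightarrow> complex" where
  "potts_weight y es \<sigma> = prod_list (map (\<lambda>(u, v). if \<sigma> u = \<sigma> v then y else 1) es)"

theorem fortuin_kasteleyn:
  assumes in_range: "\<forall>(u, v)\<in>set es. u < N \<and> v < N"
  shows "(\<Sum>\<sigma>\<in>colourings N m. potts_weight y es \<sigma>) =
    (\<Sum>A\<in>Pow {0..<length es}. of_nat m ^ ncomp N es A * (y - 1) ^ card A)"
proof -
  let ?E = "{0..<length es}"
  let ?mono = "\<lambda>\<sigma> i. \<sigma> (fst (es ! i)) = \<sigma> (snd (es ! i))"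
  have expand: "potts_weight y es \<sigma> =
      (\<Sum>A\<in>Pow ?E. of_bool (\<forall>i\<in>A. ?mono \<sigma> i) * (y - 1) ^ card A)" for \<sigma>
  proof -
    have "potts_weight y es \<sigma> = (\<Prod>i\<in>?E. of_bool (?mono \<sigma> i) * (y - 1) + 1)"
      by (auto simp: potts_weight_def prod.list_conv_set_nth split_def intro!: prod.cong)
    also have "\<dots> = (\<Sum>A\<in>Pow ?E. \<Prod>i\<in>A. of_bool (?mono \<sigma> i) * (y - 1))"
      by (simp add: prod_add)
    also have "\<dots> = (\<Sum>A\<in>Pow ?E. of_bool (\<forall>i\<in>A. ?mono \<sigma> i) * (y - 1) ^ card A)"
      by (intro sum.cong refl) (simp add: prod.distrib prod_of_bool finite_subset)
    finally show ?thesis .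
  qed
  have "(\<Sum>\<sigma>\<in>colourings N m. potts_weight y es \<sigma>) =
      (\<Sum>A\<in>Pow ?E. of_nat (card {\<sigma> \<in> colourings N m. \<forall>i\<in>A. ?mono \<sigma> i}) * (y - 1) ^ card A)"
    unfolding expand
    by (subst sum.swap)
      (simp add: sum_distrib_right[symmetric] finite_colourings Collect_conj_eq Int_commute)
  also have "\<dots> = (\<Sum>A\<in>Pow ?E. of_nat m ^ ncomp N es A * (y - 1) ^ card A)"
    by (intro sum.cong refl) (simp add: card_colourings_constant_on_edges[OF in_range])
  finally show ?thesis .
qed

section \<open>The diamond hierarchical lattice\<close>

definition diamond_edges :: "nat \<Rightarrow> (nat \<times> nat) list \<Rightarrow> (nat \<times> nat) list" where
  "diamond_edges N es = concat (map (\<lambda>k. map (\<lambda>(u, v). (dhl_emb N k u, dhl_emb N k v)) es) [0..<4])"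

lemma nverts_0: "nverts 0 = 2" and edges_0: "edges 0 = [(0, 1)]"
  by (simp_all add: nverts_def edges_def)

lemma nverts_Suc: "nverts (Suc n) = 4 + 4 * (nverts n - 2)"
  and edges_Suc: "edges (Suc n) = diamond_edges (nverts n) (edges n)"
  by (simp_all add: nverts_def edges_def diamond_edges_def split: prod.splits)

lemma two_le_nverts: "2 \<le> nverts n"
  by (induction n) (simp_all add: nverts_0 nverts_Suc)

lemma less_four_cases: "(k :: nat) < 4 \<Longrightarrow> k = 0 \<or> k = 1 \<or> k = 2 \<or> k = 3"
  by auto

lemma dhl_emb_inner: "2 \<le> v \<Longrightarrow> dhl_emb N k v = 4 + k * (N - 2) + (v - 2)"
  by (simp add: dhl_emb_def)

lemma diamond_src_tgt_less: "k < 4 \<Longrightarrow> diamond_src k < 4 \<and> diamond_tgt k < 4"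
  by (auto simp: diamond_src_def diamond_tgt_def dest!: less_four_cases)

lemma dhl_emb_less:
  assumes "k < 4" "v < N"
  shows "dhl_emb N k v < 4 + 4 * (N - 2)"
proof (cases "2 \<le> v")
  case True
  have "k * (N - 2) + (v - 2) < Suc k * (N - 2)"
    using True \<open>v < N\<close> by simp
  also have "\<dots> \<le> 4 * (N - 2)"
    using \<open>k < 4\<close> by (intro mult_le_mono1) simp
  finally show ?thesis
    using True by (simp add: dhl_emb_inner)
next
  case False
  then show ?thesis
    using diamond_src_tgt_less[OF \<open>k < 4\<close>] by (auto simp: dhl_emb_def)
qed

lemma dhl_emb_decode:
  assumes "4 \<le> w" "w < 4 + 4 * (N - 2)"
  shows "(w - 4) div (N - 2) < 4" "(w - 4) mod (N - 2) + 2 < N"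
    "dhl_emb N ((w - 4) div (N - 2)) ((w - 4) mod (N - 2) + 2) = w"
proof -
  have "N - 2 > 0" using assms by auto
  then have "(w - 4) mod (N - 2) < N - 2" by simp
  then show "(w - 4) mod (N - 2) + 2 < N" by simp
  show "(w - 4) div (N - 2) < 4"
    using assms by (simp add: less_mult_imp_div_less mult.commute)
  have "(w - 4) div (N - 2) * (N - 2) + (w - 4) mod (N - 2) = w - 4"
    by (rule div_mult_mod_eq)
  then show "dhl_emb N ((w - 4) div (N - 2)) ((w - 4) mod (N - 2) + 2) = w"
    using assms by (simp add: dhl_emb_inner add.assoc)
qed

lemma dhl_emb_encode:
  assumes "2 \<le> v" "v < N"
  shows "(dhl_emb N k v - 4) div (N - 2) = k" "(dhl_emb N k v - 4) mod (N - 2) + 2 = v"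
proof -
  obtain r where r: "v = r + 2" "r < N - 2"
    using assms by (metis add.commute le_Suc_ex less_diff_conv)
  then show "(dhl_emb N k v - 4) div (N - 2) = k" "(dhl_emb N k v - 4) mod (N - 2) + 2 = v"
    by (simp_all add: dhl_emb_inner)
qed

lemma edges_less_nverts: "(u, v) \<in> set (edges n) \<Longrightarrow> u < nverts n \<and> v < nverts n"
  by (induction n arbitrary: u v)
    (auto simp: nverts_0 edges_0 nverts_Suc edges_Suc diamond_edges_def dhl_emb_less)

definition diamond_split :: "nat \<Rightarrow> colouring \<Rightarrow> colouring \<times> colouring \<times> colouring \<times> colouring" where
  "diamond_split N \<sigma> =
    (let part = \<lambda>k. restrict (\<sigma> \<circ> dhl_emb N k) {0..<N} in (part 0, part 1, part 2, part 3))"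

text \<open>Inverse of \<open>dhl_emb\<close>: the diamond vertices \<open>a, b, c, d\<close> (\<open>0..3\<close>) take the colour of a
  marked vertex of a copy lying on them; any other vertex is decoded into its copy and its
  vertex there.\<close>
definition diamond_glue :: "nat \<Rightarrow> colouring \<times> colouring \<times> colouring \<times> colouring \<Rightarrow> colouring" where
  "diamond_glue N = (\<lambda>(a, b, c, d). restrict (\<lambda>w.
     if w < 4 then [a 0, b 1, a 1, c 1] ! w
     else ([a, b, c, d] ! ((w - 4) div (N - 2))) ((w - 4) mod (N - 2) + 2)) {0..<4 + 4 * (N - 2)})"

text \<open>The copies sit on the diamond edges \<open>ac, cb, ad, db\<close>, so their colourings must agree
  on the shared diamond vertices.\<close>
definition diamond_compatible :: "colouring \<times> colouring \<times> colouring \<times> colouring \<Rightarrow> bool" where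
  "diamond_compatible = (\<lambda>(a, b, c, d). a 0 = c 0 \<and> a 1 = b 0 \<and> b 1 = d 1 \<and> c 1 = d 0)"

lemma diamond_glue_split:
  assumes "2 \<le> N" "\<sigma> \<in> colourings (4 + 4 * (N - 2)) m"
  shows "diamond_glue N (diamond_split N \<sigma>) = \<sigma>"
proof (rule extensionalityI[of _ "{0..<4 + 4 * (N - 2)}"])
  fix w assume w: "w \<in> {0..<4 + 4 * (N - 2)}"
  show "diamond_glue N (diamond_split N \<sigma>) w = \<sigma> w"
  proof (cases "w < 4")
    case True
    then show ?thesis
      using \<open>2 \<le> N\<close> by (auto simp: diamond_glue_def diamond_split_def dhl_emb_def
          diamond_src_def diamond_tgt_def dest!: less_four_cases)
  next
    case False
    then show ?thesis
      using w dhl_emb_decode[of w N] less_four_cases[of "(w - 4) div (N - 2)"]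
      by (auto simp: diamond_glue_def diamond_split_def)
  qed
qed (use assms in \<open>auto simp: diamond_glue_def colourings_def PiE_def split: prod.split\<close>)

lemma diamond_split_mem:
  assumes "2 \<le> N" "\<sigma> \<in> colourings (4 + 4 * (N - 2)) m"
  shows "diamond_split N \<sigma> \<in> colourings N m \<times> colourings N m \<times> colourings N m \<times> colourings N m"
    and "diamond_compatible (diamond_split N \<sigma>)"
proof -
  have "restrict (\<sigma> \<circ> dhl_emb N k) {0..<N} \<in> colourings N m" if "k < 4" for k
    using assms(2) dhl_emb_less[OF that] by (auto simp: colourings_def)
  then show "diamond_split N \<sigma> \<in> colourings N m \<times> colourings N m \<times> colourings N m \<times> colourings N m"
    by (simp add: diamond_split_def)
  show "diamond_compatible (diamond_split N \<sigma>)"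
    using assms(1) by (simp add: diamond_compatible_def diamond_split_def dhl_emb_def
        diamond_src_def diamond_tgt_def)
qed

lemma diamond_glue_dhl_emb:
  assumes "2 \<le> N" "k < 4" "v < N" "diamond_compatible (a, b, c, d)"
  shows "diamond_glue N (a, b, c, d) (dhl_emb N k v) = ([a, b, c, d] ! k) v"
proof (cases "2 \<le> v")
  case True
  then have "4 \<le> dhl_emb N k v"
    by (simp add: dhl_emb_inner)
  then show ?thesis
    using dhl_emb_less[OF assms(2,3)] dhl_emb_encode[OF True \<open>v < N\<close>, of k]
    by (simp add: diamond_glue_def)
next
  case False
  then have "v = 0 \<or> v = 1" by auto
  then show ?thesis
    using assms less_four_cases[OF \<open>k < 4\<close>]
    by (auto simp: diamond_glue_def diamond_compatible_def dhl_emb_def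
        diamond_src_def diamond_tgt_def)
qed

lemma diamond_split_glue:
  assumes "2 \<le> N" "a \<in> colourings N m" "b \<in> colourings N m" "c \<in> colourings N m"
    "d \<in> colourings N m" "diamond_compatible (a, b, c, d)"
  shows "diamond_split N (diamond_glue N (a, b, c, d)) = (a, b, c, d)"
proof -
  have "restrict (diamond_glue N (a, b, c, d) \<circ> dhl_emb N k) {0..<N} = [a, b, c, d] ! k"
    if "k < 4" for k
  proof (rule extensionalityI[of _ "{0..<N}"])
    show "[a, b, c, d] ! k \<in> extensional {0..<N}"
      using assms(2-5) less_four_cases[OF that] by (auto simp: colourings_def PiE_def)
  qed (use assms(1,6) that diamond_glue_dhl_emb in auto)
  then show ?thesis
    by (simp add: diamond_split_def)
qed

lemma diamond_glue_mem:
  assumes "2 \<le> N" "a \<in> colourings N m" "b \<in> colourings N m" "c \<in> colourings N m"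
    "d \<in> colourings N m"
  shows "diamond_glue N (a, b, c, d) \<in> colourings (4 + 4 * (N - 2)) m"
proof -
  have "([a, b, c, d] ! k) v < m" if "k < 4" "v < N" for k v
    using assms(2-5) less_four_cases[OF that(1)] that(2) by (auto simp: colourings_less)
  then show ?thesis
    using assms dhl_emb_decode
    by (auto simp: diamond_glue_def colourings_def nth_Cons' colourings_less)
qed

section \<open>Partition functions with pinned marked vertices\<close>

definition boundary_Z :: "complex \<Rightarrow> nat \<Rightarrow> nat \<Rightarrow> (nat \<times> nat) list \<Rightarrow> nat \<Rightarrow> nat \<Rightarrow> complex" where
  "boundary_Z y m N es s t =
    (\<Sum>\<sigma>\<in>colourings N m. if \<sigma> 0 = s \<and> \<sigma> 1 = t then potts_weight y es \<sigma> else 0)"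

lemma potts_weight_diamond_edges:
  assumes "\<forall>(u, v)\<in>set es. u < N \<and> v < N"
  shows "potts_weight y (diamond_edges N es) \<sigma> = (case diamond_split N \<sigma> of (a, b, c, d) \<Rightarrow>
    potts_weight y es a * potts_weight y es b * potts_weight y es c * potts_weight y es d)"
proof -
  have restrict: "potts_weight y es (restrict f {0..<N}) = potts_weight y es f" for f
    unfolding potts_weight_def using assms by (intro arg_cong[of _ _ prod_list] map_cong) auto
  have "potts_weight y (diamond_edges N es) \<sigma> =
      potts_weight y es (\<sigma> \<circ> dhl_emb N 0) * potts_weight y es (\<sigma> \<circ> dhl_emb N 1) *
      potts_weight y es (\<sigma> \<circ> dhl_emb N 2) * potts_weight y es (\<sigma> \<circ> dhl_emb N 3)"
    by (simp add: diamond_edges_def potts_weight_def upt_rec numeral_eq_Suc o_def split_def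
        mult.assoc)
  then show ?thesis
    by (simp add: diamond_split_def restrict)
qed

lemma boundary_Z_diamond_eq_sum_compatible:
  assumes N: "2 \<le> N" and in_range: "\<forall>(u, v)\<in>set es. u < N \<and> v < N"
  shows "boundary_Z y m (4 + 4 * (N - 2)) (diamond_edges N es) s t =
    (\<Sum>p\<in>{p \<in> colourings N m \<times> colourings N m \<times> colourings N m \<times> colourings N m.
        diamond_compatible p}. case p of (a, b, c, d) \<Rightarrow>
      if a 0 = s \<and> b 1 = t then potts_weight y es a * potts_weight y es b *
        potts_weight y es c * potts_weight y es d else 0)"
  unfolding boundary_Z_def
proof (rule sum.reindex_bij_witness[where i = "diamond_glue N" and j = "diamond_split N"])
  fix \<sigma> assume \<sigma>: "\<sigma> \<in> colourings (4 + 4 * (N - 2)) m"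
  then show "diamond_glue N (diamond_split N \<sigma>) = \<sigma>"
    by (rule diamond_glue_split[OF N])
  show "diamond_split N \<sigma> \<in> {p \<in> colourings N m \<times> colourings N m \<times> colourings N m \<times> colourings N m.
      diamond_compatible p}"
    using diamond_split_mem[OF N \<sigma>] by simp
  have "\<sigma> (dhl_emb N 0 0) = \<sigma> 0" "\<sigma> (dhl_emb N 1 1) = \<sigma> 1"
    by (simp_all add: dhl_emb_def diamond_src_def diamond_tgt_def)
  then show "(case diamond_split N \<sigma> of (a, b, c, d) \<Rightarrow>
      if a 0 = s \<and> b 1 = t then potts_weight y es a * potts_weight y es b *
        potts_weight y es c * potts_weight y es d else 0) =
    (if \<sigma> 0 = s \<and> \<sigma> 1 = t then potts_weight y (diamond_edges N es) \<sigma> else 0)"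
    using N by (simp add: potts_weight_diamond_edges[OF in_range] diamond_split_def)
next
  fix p assume "p \<in> {p \<in> colourings N m \<times> colourings N m \<times> colourings N m \<times> colourings N m.
      diamond_compatible p}"
  then show "diamond_split N (diamond_glue N p) = p"
    and "diamond_glue N p \<in> colourings (4 + 4 * (N - 2)) m"
    using diamond_split_glue[OF N] diamond_glue_mem[OF N] by auto
qed

lemma sum_boundary_Z_series:
  assumes "2 \<le> N"
  shows "(\<Sum>c<m. boundary_Z y m N es s c * boundary_Z y m N es c t) =
    (\<Sum>a\<in>colourings N m. \<Sum>b\<in>colourings N m.
      if a 0 = s \<and> a 1 = b 0 \<and> b 1 = t then potts_weight y es a * potts_weight y es b else 0)"
proof -
  let ?W = "potts_weight y es"
  have "(\<Sum>c<m. boundary_Z y m N es s c * boundary_Z y m N es c t) =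
      (\<Sum>c<m. \<Sum>a\<in>colourings N m. \<Sum>b\<in>colourings N m.
        (if a 0 = s \<and> a 1 = c then ?W a else 0) * (if b 0 = c \<and> b 1 = t then ?W b else 0))"
    by (simp add: boundary_Z_def sum_product)
  also have "\<dots> = (\<Sum>a\<in>colourings N m. \<Sum>b\<in>colourings N m. \<Sum>c<m.
        (if a 0 = s \<and> a 1 = c then ?W a else 0) * (if b 0 = c \<and> b 1 = t then ?W b else 0))"
    by (subst sum.swap) (simp add: sum.swap[of _ "{..<m}"])
  also have "\<dots> = (\<Sum>a\<in>colourings N m. \<Sum>b\<in>colourings N m.
      if a 0 = s \<and> a 1 = b 0 \<and> b 1 = t then ?W a * ?W b else 0)"
  proof (intro sum.cong refl)
    fix a b assume "a \<in> colourings N m"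
    then have "a 1 < m"
      using \<open>2 \<le> N\<close> by (simp add: colourings_less)
    have "(\<Sum>c<m. (if a 0 = s \<and> a 1 = c then ?W a else 0) * (if b 0 = c \<and> b 1 = t then ?W b else 0))
        = (\<Sum>c<m. if c = a 1 then (if a 0 = s \<and> a 1 = b 0 \<and> b 1 = t then ?W a * ?W b else 0) else 0)"
      (is "?lhs = _")
      by (intro sum.cong refl) auto
    then show "?lhs = (if a 0 = s \<and> a 1 = b 0 \<and> b 1 = t then ?W a * ?W b else 0)"
      using \<open>a 1 < m\<close> by simp
  qed
  finally show ?thesis .
qed

lemma boundary_Z_diamond:
  assumes N: "2 \<le> N" and in_range: "\<forall>(u, v)\<in>set es. u < N \<and> v < N"
  shows "boundary_Z y m (4 + 4 * (N - 2)) (diamond_edges N es) s t =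
    (\<Sum>c<m. boundary_Z y m N es s c * boundary_Z y m N es c t) ^ 2"
proof -
  let ?X = "colourings N m" and ?W = "potts_weight y es"
  define series where
    "series a b = (if a 0 = s \<and> a 1 = b 0 \<and> b 1 = t then ?W a * ?W b else 0)" for a b
  have "boundary_Z y m (4 + 4 * (N - 2)) (diamond_edges N es) s t =
      (\<Sum>p\<in>{p \<in> ?X \<times> ?X \<times> ?X \<times> ?X. diamond_compatible p}. case p of (a, b, c, d) \<Rightarrow>
        if a 0 = s \<and> b 1 = t then ?W a * ?W b * ?W c * ?W d else 0)"
    by (rule boundary_Z_diamond_eq_sum_compatible[OF N in_range])
  also have "\<dots> = (\<Sum>p\<in>?X \<times> ?X \<times> ?X \<times> ?X. if diamond_compatible p then case p of (a, b, c, d) \<Rightarrow>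
      if a 0 = s \<and> b 1 = t then ?W a * ?W b * ?W c * ?W d else 0 else 0)"
    by (rule sum.inter_filter) (simp add: finite_colourings)
  also have "\<dots> = (\<Sum>a\<in>?X. \<Sum>b\<in>?X. \<Sum>c\<in>?X. \<Sum>d\<in>?X. if diamond_compatible (a, b, c, d) then
      if a 0 = s \<and> b 1 = t then ?W a * ?W b * ?W c * ?W d else 0 else 0)"
    by (simp only: sum.cartesian_product' prod.case)
  also have "\<dots> = (\<Sum>a\<in>?X. \<Sum>b\<in>?X. \<Sum>c\<in>?X. \<Sum>d\<in>?X. series a b * series c d)"
    by (intro sum.cong refl) (auto simp: diamond_compatible_def series_def)
  also have "\<dots> = (\<Sum>a\<in>?X. \<Sum>b\<in>?X. series a b) ^ 2"
    unfolding power2_eq_square sum_distrib_right by (simp only: sum_distrib_left)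
  also have "\<dots> = (\<Sum>c<m. boundary_Z y m N es s c * boundary_Z y m N es c t) ^ 2"
    by (simp add: sum_boundary_Z_series[OF N] series_def)
  finally show ?thesis .
qed

definition renorm :: "complex \<Rightarrow> complex \<times> complex \<Rightarrow> complex \<times> complex" where
  "renorm q = (\<lambda>(u, v). ((u\<^sup>2 + (q - 1) * v\<^sup>2)\<^sup>2, v\<^sup>2 * (2 * u + (q - 2) * v)\<^sup>2))"

lemma sum_two_valued_product:
  fixes u v :: "'a :: comm_ring_1"
  assumes "s < m" "t < m"
  shows "(\<Sum>c<m. (if s = c then u else v) * (if c = t then u else v)) =
    (if s = t then u\<^sup>2 + (of_nat m - 1) * v\<^sup>2 else 2 * u * v + (of_nat m - 2) * v\<^sup>2)"
proof -
  have "(\<Sum>c<m. (if s = c then u else v) * (if c = t then u else v)) =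
      (\<Sum>c<m. v * v + (if c = s then (u - v) * v else 0) + (if c = t then v * (u - v) else 0)
        + (if c = s then (if s = t then (u - v)\<^sup>2 else 0) else 0))"
    by (intro sum.cong refl) (auto simp: power2_eq_square algebra_simps)
  also have "\<dots> = of_nat m * (v * v) + (u - v) * v + v * (u - v) + (if s = t then (u - v)\<^sup>2 else 0)"
    using assms by (simp add: sum.distrib)
  also have "\<dots> = (if s = t then u\<^sup>2 + (of_nat m - 1) * v\<^sup>2 else 2 * u * v + (of_nat m - 2) * v\<^sup>2)"
    by (simp add: power2_eq_square algebra_simps)
  finally show ?thesis .
qed

lemma boundary_Z_single_edge:
  assumes "s < m" "t < m"
  shows "boundary_Z y m 2 [(0, 1)] s t = (if s = t then y else 1)"
proof -
  define \<tau> :: colouring where "\<tau> = restrict (\<lambda>i. if i = 0 then s else t) {0..<2}"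
  have "{\<sigma> \<in> colourings 2 m. \<sigma> 0 = s \<and> \<sigma> 1 = t} = {\<tau>}"
    using assms by (fastforce simp: \<tau>_def colourings_def PiE_def extensional_def less_2_cases_iff)
  then have "boundary_Z y m 2 [(0, 1)] s t = potts_weight y [(0, 1)] \<tau>"
    by (simp add: boundary_Z_def sum.inter_filter[symmetric] finite_colourings)
  then show ?thesis
    by (simp add: potts_weight_def \<tau>_def)
qed

lemma boundary_Z_DHL:
  assumes "s < m" "t < m" "(renorm (of_nat m) ^^ n) (y, 1) = (u, v)"
  shows "boundary_Z y m (nverts n) (edges n) s t = (if s = t then u else v)"
  using assms
proof (induction n arbitrary: s t u v)
  case 0
  then show ?case
    unfolding nverts_0 edges_0 boundary_Z_single_edge[OF 0(1,2)] by simp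
next
  case (Suc n)
  obtain u' v' where uv': "(renorm (of_nat m) ^^ n) (y, 1) = (u', v')"
    by fastforce
  have in_range: "\<forall>(u, v)\<in>set (edges n). u < nverts n \<and> v < nverts n"
    using edges_less_nverts by blast
  have "boundary_Z y m (nverts (Suc n)) (edges (Suc n)) s t =
      (\<Sum>c<m. boundary_Z y m (nverts n) (edges n) s c * boundary_Z y m (nverts n) (edges n) c t) ^ 2"
    by (simp add: nverts_Suc edges_Suc boundary_Z_diamond[OF two_le_nverts in_range])
  also have "\<dots> = (\<Sum>c<m. (if s = c then u' else v') * (if c = t then u' else v')) ^ 2"
    using Suc.IH[OF _ _ uv'] Suc.prems(1,2) by (intro arg_cong[where f = power2] sum.cong) auto
  also have "\<dots> = (if s = t then u'\<^sup>2 + (of_nat m - 1) * v'\<^sup>2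
      else 2 * u' * v' + (of_nat m - 2) * v'\<^sup>2)\<^sup>2"
    by (simp only: sum_two_valued_product[OF Suc.prems(1,2)])
  also have "\<dots> = (if s = t then u else v)"
  proof -
    have "(u, v) = renorm (of_nat m) (u', v')"
      using Suc.prems(3) uv' by simp
    then show ?thesis
      by (simp add: renorm_def power2_eq_square algebra_simps)
  qed
  finally show ?case .
qed

lemma sum_boundary_Z:
  assumes "2 \<le> N"
  shows "(\<Sum>s<m. \<Sum>t<m. boundary_Z y m N es s t) = (\<Sum>\<sigma>\<in>colourings N m. potts_weight y es \<sigma>)"
proof -
  have "(\<Sum>s<m. \<Sum>t<m. if \<sigma> 0 = s \<and> \<sigma> 1 = t then potts_weight y es \<sigma> else 0) = potts_weight y es \<sigma>"
    if "\<sigma> \<in> colourings N m" for \<sigma>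
  proof -
    have "\<sigma> 0 < m" "\<sigma> 1 < m"
      using that assms by (simp_all add: colourings_less)
    then show ?thesis
      by (simp add: conj_commute[of "\<sigma> 0 = _"] if_if_eq_conj[symmetric] sum.delta')
  qed
  then show ?thesis
    unfolding boundary_Z_def by (simp add: sum.swap[of _ "colourings N m"])
qed

lemma potts_sum_DHL:
  assumes "(renorm (of_nat m) ^^ n) (y, 1) = (u, v)"
  shows "(\<Sum>\<sigma>\<in>colourings (nverts n) m. potts_weight y (edges n) \<sigma>) =
    of_nat m * (u + (of_nat m - 1) * v)"
proof -
  have row: "(\<Sum>t<m. if s = t then u else v) = u + (of_nat m - 1) * v" if "s < m" for s
  proof -
    have "(\<Sum>t<m. if s = t then u else v) = (\<Sum>t<m. v + (if s = t then u - v else 0))"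
      by (intro sum.cong) auto
    then show ?thesis
      using that by (simp add: sum.distrib algebra_simps)
  qed
  have "(\<Sum>\<sigma>\<in>colourings (nverts n) m. potts_weight y (edges n) \<sigma>) =
      (\<Sum>s<m. \<Sum>t<m. if s = t then u else v)"
    using boundary_Z_DHL[OF _ _ assms] by (simp add: sum_boundary_Z[OF two_le_nverts, symmetric])
  also have "\<dots> = of_nat m * (u + (of_nat m - 1) * v)"
    using row by simp
  finally show ?thesis .
qed

section \<open>The polynomial identity\<close>

lemma poly_eq_0_if_infinite_roots:
  fixes p :: "'a :: idom poly"
  assumes "infinite S" "\<And>x. x \<in> S \<Longrightarrow> poly p x = 0"
  shows "p = 0"
  using assms poly_roots_finite[of p] finite_subset[of S "{x. poly p x = 0}"] by blast

lemma poly_poly_eqI: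
  fixes f g :: "'a :: {idom, ring_char_0} poly poly"
  assumes "infinite S" "\<And>q y. q \<in> S \<Longrightarrow> poly (poly f [:y:]) q = poly (poly g [:y:]) q"
  shows "f = g"
proof -
  have "poly (f - g) [:y:] = 0" for y
    using assms by (intro poly_eq_0_if_infinite_roots[of S]) simp_all
  moreover have "infinite (range (\<lambda>y :: 'a. [:y:]))"
    using infinite_UNIV_char_0 by (auto dest!: finite_imageD simp: inj_on_def)
  ultimately have "f - g = 0"
    by (intro poly_eq_0_if_infinite_roots[of "range (\<lambda>y. [:y:])"]) auto
  then show ?thesis
    by simp
qed

lemma poly_poly_qv: "poly (poly qv [:y:]) q = q"
  and poly_poly_yv: "poly (poly yv [:y:]) q = y"
  by (simp_all add: qv_def yv_def)

lemma poly_poly_Rlift_power: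
  assumes "(Rlift ^^ n) (yv, 1) = (P, Q)"
  shows "(poly (poly P [:y:]) q, poly (poly Q [:y:]) q) = (renorm q ^^ n) (y, 1)"
  using assms
proof (induction n arbitrary: P Q)
  case 0
  then show ?case
    by (auto simp: poly_poly_yv)
next
  case (Suc n)
  obtain P' Q' where PQ': "(Rlift ^^ n) (yv, 1) = (P', Q')"
    by fastforce
  have "(P, Q) = Rlift (P', Q')"
    using Suc.prems PQ' by simp
  moreover have "(renorm q ^^ Suc n) (y, 1) =
      renorm q (poly (poly P' [:y:]) q, poly (poly Q' [:y:]) q)"
    using Suc.IH[OF PQ'] by simp
  ultimately show ?case
    by (simp add: Rlift_def renorm_def poly_poly_qv)
qed

lemma hom_subst_S0poly: "hom_subst S0poly P Q = qv * (P + (qv - 1) * Q)"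
proof -
  have S0poly: "S0poly = [:[:0, -1, 1:], [:0, 1:]:]"
    by (simp add: S0poly_def qv_def yv_def one_pCons)
  have "hom_subst S0poly P Q = [:[:0, -1, 1:]:] * Q + [:[:0, 1:]:] * P"
    by (simp add: hom_subst_def S0poly atMost_Suc)
  also have "\<dots> = qv * (qv - 1) * Q + qv * P"
    by (simp add: qv_def one_pCons)
  finally show ?thesis
    by (simp add: algebra_simps)
qed

lemma poly_poly_Zpoly:
  "poly (poly (Zpoly n) [:y:]) (of_nat m) =
    (\<Sum>\<sigma>\<in>colourings (nverts n) m. potts_weight y (edges n) \<sigma>)"
proof -
  have "\<forall>(u, v)\<in>set (edges n). u < nverts n \<and> v < nverts n"
    using edges_less_nverts by blast
  then show ?thesis
    by (simp add: Zpoly_def poly_sum poly_poly_qv poly_poly_yv fortuin_kasteleyn)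
qed

lemma Zpoly_eq_hom_subst_S0poly:
  assumes "(Rlift ^^ n) (yv, 1) = (P, Q)"
  shows "Zpoly n = hom_subst S0poly P Q"
proof (rule poly_poly_eqI)
  show "infinite (range (of_nat :: nat \<Rightarrow> complex))"
    by (auto dest!: finite_imageD simp: inj_on_def)
  fix q y assume "q \<in> range (of_nat :: nat \<Rightarrow> complex)"
  then obtain m where m: "q = of_nat m"
    by blast
  obtain u v where uv: "(renorm q ^^ n) (y, 1) = (u, v)"
    by fastforce
  have "poly (poly (Zpoly n) [:y:]) q = q * (u + (q - 1) * v)"
    using potts_sum_DHL[OF uv[unfolded m]] by (simp add: m poly_poly_Zpoly)
  also have "\<dots> = poly (poly (hom_subst S0poly P Q) [:y:]) q"
    using poly_poly_Rlift_power[OF assms, of y q] uv by (simp add: hom_subst_S0poly poly_poly_qv)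
  finally show "poly (poly (Zpoly n) [:y:]) q = poly (poly (hom_subst S0poly P Q) [:y:]) q" .
qed

theorem proposition5p5:
  fixes n :: nat
  shows "zero_divisor (Zpoly n) = pullback_div n S0poly"
proof -
  obtain P Q where "(Rlift ^^ n) (yv, 1) = (P, Q)"
    by fastforce
  then show ?thesis
    by (simp add: pullback_div_def Zpoly_eq_hom_subst_S0poly)
qed

end
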